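(* Let $G$ be an $(n,d,\lambda)$-graph, $G'\subseteq G$ a subgraph, and $10\lambda\le\delta\le d$. Suppose $A,B\subseteq V(G)$ satisfy $|A|\le \delta n/(100d)$ and every $v\in A$ has $|N_{G'}(v)\cap B|\ge\delta$. Then $$|N_{G'}(A)\cap B|\ \ge\ \min\left(\frac{\delta^2|A|}{8\lambda^2},\ \frac{\delta n}{10d}\right)\ \ge\ 10|A|.$$
   Context: An $(n,d,\lambda)$-graph is an $n$-vertex $d$-regular graph whose second largest eigenvalue in absolute value is at most $\lambda$. For a vertex $v$, $N_{G'}(v)$ is its neighbourhood in $G'$; for a set $A$, $N_{G'}(A)=\left(\bigcup_{a\in A}N_{G'}(a)\right)\setminus A$ is the external neighbourhood. *)

theory Defs
  imports "Jordan_Normal_Form.Char_Poly"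
begin

definition simple_graph_on :: "nat \<Rightarrow> (nat \<Rightarrow> nat \<Rightarrow> bool) \<Rightarrow> bool" where
  "simple_graph_on n E \<longleftrightarrow>
     (\<forall>u v. E u v \<longrightarrow> u < n \<and> v < n) \<and> (\<forall>u v. E u v \<longrightarrow> E v u) \<and> (\<forall>v. \<not> E v v)"

definition nbhd :: "(nat \<Rightarrow> nat \<Rightarrow> bool) \<Rightarrow> nat \<Rightarrow> nat set" where
  "nbhd E v = {u. E v u}"

definition nbhd_set :: "(nat \<Rightarrow> nat \<Rightarrow> bool) \<Rightarrow> nat set \<Rightarrow> nat set" where
  "nbhd_set E A = (\<Union>a\<in>A. nbhd E a) - A"

definition adj_mat :: "nat \<Rightarrow> (nat \<Rightarrow> nat \<Rightarrow> bool) \<Rightarrow> real mat" where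
  "adj_mat n E = mat n n (\<lambda>(i, j). if E i j then 1 else 0)"

text \<open>(n,d,lambda)-graph: n-vertex d-regular simple graph such that, after removing one
  copy of the eigenvalue d from the spectrum (with multiplicity) of the adjacency matrix,
  all remaining eigenvalues have absolute value at most lambda.\<close>
definition ndl_graph :: "nat \<Rightarrow> nat \<Rightarrow> real \<Rightarrow> (nat \<Rightarrow> nat \<Rightarrow> bool) \<Rightarrow> bool" where
  "ndl_graph n d lam E \<longleftrightarrow>
     simple_graph_on n E \<and>
     (\<forall>v<n. card (nbhd E v) = d) \<and>
     (\<exists>q. char_poly (adj_mat n E) = [:- real d, 1:] * q \<and>
          (\<forall>z::complex. poly (map_poly complex_of_real q) z = 0 \<longrightarrow> cmod z \<le> lam))"

definition subgraph :: "(nat \<Rightarrow> nat \<Rightarrow> bool) \<Rightarrow> (nat \<Rightarrow> nat \<Rightarrow> bool) \<Rightarrow> bool" where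
  "subgraph E' E \<longleftrightarrow> (\<forall>u v. E' u v \<longrightarrow> E u v) \<and> (\<forall>u v. E' u v \<longrightarrow> E' v u)"

end

(* Let J be the all-ones matrix. The all-ones vector is a d-eigenvector of the adjacency matrix
   A_G, so a basis change starting with it shows that T = A_G - (d/n) J has characteristic
   polynomial x q(x), where q carries the nontrivial eigenvalues of G. Hence T is symmetric with
   all eigenvalues of modulus at most lambda, and so |T x| <= lambda |x|. No spectral theorem is
   needed for this: the Jordan normal form bounds the entries of all powers of a matrix whose
   eigenvalues lie in the open unit disc, whereas for a symmetric matrix with |T x| > |x| repeated
   squaring and Cauchy-Schwarz make |T^(2^k) x| grow without bound.

   Testing T against indicator vectors gives the expander mixing lemma
   (e(S, Z) - d |S| |Z| / n)^2 <= lambda^2 |S| |Z|. Take S = A and let Z be the union of A and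
   N_G'(A) intersected with B, so that e(A, Z) >= delta |A|. If |Z| <= delta n / (2d), the
   deviation is at least delta |A| / 2, forcing |Z| >= delta^2 |A| / (4 lambda^2); otherwise
   |Z| > delta n / (2d). Either way, removing the at most delta n / (100 d) vertices of A from Z
   leaves the claimed bound. *)

theory Submission
  imports Defs "Jordan_Normal_Form.Schur_Decomposition" "Jordan_Normal_Form.Spectral_Radius"
begin

section \<open>Deflating a known eigenvector\<close>

definition lower_right_block :: "'a mat \<Rightarrow> 'a mat" where
  "lower_right_block A = mat (dim_row A - 1) (dim_col A - 1) (\<lambda>(i, j). A $$ (i + 1, j + 1))"

lemma char_poly_first_col_eigen:
  fixes A :: "'a :: comm_ring_1 mat"
  assumes A: "A \<in> carrier_mat n n" and n: "n \<noteq> 0"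
    and col: "col A 0 = e \<cdot>\<^sub>v unit_vec n 0"
  shows "char_poly A = [:- e, 1:] * char_poly (lower_right_block A)"
proof -
  obtain A1 A2 A0 A3 where split: "split_block A 1 1 = (A1, A2, A0, A3)"
    by (cases "split_block A 1 1") auto
  from A n have dims: "dim_row A = 1 + (n - 1)" "dim_col A = 1 + (n - 1)" by auto
  note blocks = split_block[OF split dims]
  have col_entry: "A $$ (i, 0) = (if i = 0 then e else 0)" if "i < n" for i
    using arg_cong[OF col, of "\<lambda>v. v $ i"] that A n by auto
  have A1: "A1 = mat 1 1 (\<lambda>_. e)"
    using split col_entry[of 0] A n unfolding split_block_def Let_def by auto
  have A0: "A0 = 0\<^sub>m (n - 1) 1"
    using split col_entry A unfolding split_block_def Let_def by (auto intro!: eq_matI)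
  have A3: "A3 = lower_right_block A"
    using split A unfolding split_block_def lower_right_block_def Let_def by auto
  have "char_poly A = char_poly A1 * char_poly A3"
    using blocks(5) A0 char_poly_four_block_zeros_col[OF blocks(1,2,4)] by simp
  also have "char_poly A1 = [:- e, 1:]"
    by (simp add: A1 char_poly_defs det_def sign_def)
  finally show ?thesis unfolding A3 .
qed

lemma exists_inverse_mats_with_first_col:
  fixes v :: "'a :: conjugatable_ordered_field vec"
  assumes v: "v \<in> carrier_vec n" and v0: "v \<noteq> 0\<^sub>v n"
  obtains W W' where "W \<in> carrier_mat n n" "W' \<in> carrier_mat n n"
    "W' * W = 1\<^sub>m n" "W * W' = 1\<^sub>m n" "col W 0 = v"
proof -
  interpret cof_vec_space n "TYPE('a)" .
  have n: "n \<noteq> 0" using v v0 by auto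
  define b where "b = basis_completion v"
  define ws where "ws = gram_schmidt n b"
  define W where "W = mat_of_cols n ws"
  from basis_completion[OF v v0, folded b_def]
  have dist: "distinct b" and indep: "\<not> lin_dep (set b)"
    and b: "set b \<subseteq> carrier_vec n" and hd: "hd b = v" and len: "length b = n" by auto
  from hd len n obtain vs where bv: "b = v # vs" by (cases b) auto
  from gram_schmidt_result[OF b dist indep refl, folded ws_def]
  have ws: "set ws \<subseteq> carrier_vec n" "corthogonal ws" "length ws = n" by (auto simp: len)
  from gram_schmidt_hd[OF v, of vs, folded bv] have "hd ws = v" unfolding ws_def .
  with ws n have ws0: "ws ! 0 = v" by (cases ws) auto
  have W: "W \<in> carrier_mat n n" unfolding W_def using ws by auto
  have W': "corthogonal_inv W \<in> carrier_mat n n"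
    using W by (auto simp: corthogonal_inv_def mat_of_rows_def)
  have inv: "corthogonal_inv W * W = 1\<^sub>m n"
    using corthogonal_inv_result[OF orthogonal_mat_of_cols[OF ws]] W'
    unfolding W_def inverts_mat_def by auto
  show thesis
  proof (rule that[OF W W' inv])
    show "W * corthogonal_inv W = 1\<^sub>m n" by (rule mat_mult_left_right_inverse[OF W' W inv])
    show "col W 0 = v" unfolding W_def using ws ws0 n by (subst col_mat_of_cols) auto
  qed
qed

lemma col_conj_mat_eigenvector:
  fixes B :: "'a :: field mat"
  assumes W: "W \<in> carrier_mat n n" and W': "W' \<in> carrier_mat n n" and inv: "W' * W = 1\<^sub>m n"
    and n: "n \<noteq> 0" and B: "B \<in> carrier_mat n n" and ev: "B *\<^sub>v col W 0 = e \<cdot>\<^sub>v col W 0"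
  shows "col (W' * B * W) 0 = e \<cdot>\<^sub>v unit_vec n 0"
proof -
  have "col (W' * B * W) 0 = (W' * B) *\<^sub>v col W 0"
    using W W' B n by (intro col_mult2) auto
  also have "\<dots> = W' *\<^sub>v (e \<cdot>\<^sub>v col W 0)"
    using W W' B n ev by (subst assoc_mult_mat_vec) auto
  also have "\<dots> = e \<cdot>\<^sub>v (W' *\<^sub>v col W 0)"
    using W W' n by (intro mult_mat_vec) auto
  also have "W' *\<^sub>v col W 0 = unit_vec n 0"
    using col_mult2[OF W' W, of 0] inv n by simp
  finally show ?thesis .
qed

lemma char_poly_conj_mat:
  fixes A :: "'a :: comm_ring_1 mat"
  assumes "A \<in> carrier_mat n n" "W \<in> carrier_mat n n" "W' \<in> carrier_mat n n"
    "W' * W = 1\<^sub>m n" "W * W' = 1\<^sub>m n"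
  shows "char_poly (W' * A * W) = char_poly A"
proof (rule char_poly_similar)
  show "similar_mat (W' * A * W) A"
    unfolding similar_mat_def using assms
    by (intro exI[of _ W'] exI[of _ W] similar_mat_witI[of _ _ n]) auto
qed

text \<open>\<open>W'\<close> maps the all-ones vector to the first unit vector, so only the first row of
  \<open>W' * J\<close> is nonzero.\<close>

lemma lower_right_block_conj_minus_smult_ones_mat:
  fixes M :: "'a :: field mat"
  assumes W: "W \<in> carrier_mat n n" and W': "W' \<in> carrier_mat n n" and inv: "W' * W = 1\<^sub>m n"
    and n: "n \<noteq> 0" and col_W: "col W 0 = vec n (\<lambda>_. 1)" and M: "M \<in> carrier_mat n n"
  shows "lower_right_block (W' * (M - c \<cdot>\<^sub>m mat n n (\<lambda>_. 1)) * W) = lower_right_block (W' * M * W)"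
proof -
  define J where "J = mat n n (\<lambda>_. 1 :: 'a)"
  have J: "J \<in> carrier_mat n n" by (simp add: J_def)
  have W'_ones: "W' *\<^sub>v vec n (\<lambda>_. 1) = unit_vec n 0"
    using col_mult2[OF W' W, of 0] inv n col_W by simp
  have J_rows: "(W' * J * W) $$ (i, j) = 0" if "0 < i" "i < n" "j < n" for i j
  proof -
    have "row (W' * J) i = 0\<^sub>v n"
      using that W' arg_cong[OF W'_ones, of "\<lambda>v. v $ i"]
      by (intro eq_vecI) (auto simp: J_def scalar_prod_def)
    thus ?thesis using that W W' J by (subst index_mult_mat) auto
  qed
  have "W' * (M - c \<cdot>\<^sub>m J) * W = W' * M * W - c \<cdot>\<^sub>m (W' * J * W)"
    using W W' M J
    by (simp add: mult_minus_distrib_mat[of _ n n] minus_mult_distrib_mat[of _ n n]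
        mult_smult_distrib[of _ n n] mult_smult_assoc_mat[of _ n n])
  thus ?thesis
    unfolding J_def[symmetric] lower_right_block_def using W W' M J J_rows by (intro eq_matI) auto
qed

lemma char_poly_minus_smult_ones_mat:
  fixes M :: "'a :: conjugatable_ordered_field mat"
  assumes M: "M \<in> carrier_mat n n" and n: "n \<noteq> 0"
    and row_sums: "M *\<^sub>v vec n (\<lambda>_. 1) = d \<cdot>\<^sub>v vec n (\<lambda>_. 1)"
    and cp: "char_poly M = [:- d, 1:] * q"
  shows "char_poly (M - c \<cdot>\<^sub>m mat n n (\<lambda>_. 1)) = [:- (d - c * of_nat n), 1:] * q"
proof -
  define ones where "ones = vec n (\<lambda>_. 1 :: 'a)"
  define T where "T = M - c \<cdot>\<^sub>m mat n n (\<lambda>_. 1)"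
  have ones: "ones \<in> carrier_vec n" "ones \<noteq> 0\<^sub>v n"
    using n by (auto simp: ones_def vec_eq_iff)
  have T: "T \<in> carrier_mat n n" using M by (auto simp: T_def)
  obtain W W' where W: "W \<in> carrier_mat n n" and W': "W' \<in> carrier_mat n n"
    and inv: "W' * W = 1\<^sub>m n" "W * W' = 1\<^sub>m n" and col_W: "col W 0 = ones"
    by (rule exists_inverse_mats_with_first_col[OF ones])
  have "T *\<^sub>v ones = (d - c * of_nat n) \<cdot>\<^sub>v ones"
  proof (rule eq_vecI)
    fix i assume "i < dim_vec ((d - c * of_nat n) \<cdot>\<^sub>v ones)"
    hence i: "i < n" by (simp add: ones_def)
    have "(T *\<^sub>v ones) $ i = (M *\<^sub>v ones) $ i - c * of_nat n"
      using i M by (simp add: T_def ones_def scalar_prod_def sum_subtractf)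
    thus "(T *\<^sub>v ones) $ i = ((d - c * of_nat n) \<cdot>\<^sub>v ones) $ i"
      using i row_sums by (simp add: ones_def)
  qed (use T in \<open>simp add: ones_def\<close>)
  hence col_T: "col (W' * T * W) 0 = (d - c * of_nat n) \<cdot>\<^sub>v unit_vec n 0"
    using col_conj_mat_eigenvector[OF W W' inv(1) n T] col_W by simp
  have "char_poly (W' * T * W) = [:- (d - c * of_nat n), 1:] * char_poly (lower_right_block (W' * T * W))"
    by (rule char_poly_first_col_eigen[OF _ n col_T]) (use W W' T in simp)
  hence cp_T: "char_poly T = [:- (d - c * of_nat n), 1:] * char_poly (lower_right_block (W' * T * W))"
    by (simp only: char_poly_conj_mat[OF T W W' inv])
  have col_M: "col (W' * M * W) 0 = d \<cdot>\<^sub>v unit_vec n 0"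
    using col_conj_mat_eigenvector[OF W W' inv(1) n M] col_W row_sums by (simp add: ones_def)
  have "char_poly (W' * M * W) = [:- d, 1:] * char_poly (lower_right_block (W' * M * W))"
    by (rule char_poly_first_col_eigen[OF _ n col_M]) (use W W' M in simp)
  hence "q = char_poly (lower_right_block (W' * M * W))"
    using cp by (simp only: char_poly_conj_mat[OF M W W' inv]) (metis mult_cancel_left pCons_eq_0_iff one_neq_zero)
  with cp_T show ?thesis
    using lower_right_block_conj_minus_smult_ones_mat[OF W W' inv(1) n _ M] col_W
    by (simp add: T_def ones_def)
qed

section \<open>Norm bound for symmetric matrices\<close>

lemma scalar_prod_self_nonneg [simp]: "0 \<le> (v :: real vec) \<bullet> v"
  by (simp add: scalar_prod_def sum_nonneg)

lemma Cauchy_Schwarz_sum: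
  fixes a b :: "'a \<Rightarrow> real"
  shows "(\<Sum>i\<in>I. a i * b i)\<^sup>2 \<le> (\<Sum>i\<in>I. (a i)\<^sup>2) * (\<Sum>i\<in>I. (b i)\<^sup>2)"
proof -
  have "0 \<le> (\<Sum>i\<in>I. \<Sum>j\<in>I. (a i * b j - a j * b i)\<^sup>2)"
    by (intro sum_nonneg) auto
  also have "\<dots> = (\<Sum>i\<in>I. \<Sum>j\<in>I. (a i)\<^sup>2 * (b j)\<^sup>2) + (\<Sum>i\<in>I. \<Sum>j\<in>I. (a j)\<^sup>2 * (b i)\<^sup>2)
      - 2 * (\<Sum>i\<in>I. \<Sum>j\<in>I. (a i * b i) * (a j * b j))"
    by (simp add: power2_eq_square algebra_simps sum_subtractf sum.distrib sum_distrib_left)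
  also have "\<dots> = 2 * ((\<Sum>i\<in>I. (a i)\<^sup>2) * (\<Sum>i\<in>I. (b i)\<^sup>2) - (\<Sum>i\<in>I. a i * b i)\<^sup>2)"
    by (subst (2) sum.swap) (simp add: sum_product power2_eq_square)
  finally show ?thesis by simp
qed

lemma Cauchy_Schwarz_scalar_prod:
  fixes x y :: "real vec"
  assumes "x \<in> carrier_vec n" "y \<in> carrier_vec n"
  shows "(x \<bullet> y)\<^sup>2 \<le> (x \<bullet> x) * (y \<bullet> y)"
  using Cauchy_Schwarz_sum[of "\<lambda>i. x $ i" "\<lambda>i. y $ i" "{0..<n}"] assms
  by (simp add: scalar_prod_def power2_eq_square)

lemma pow_mat_add:
  assumes "A \<in> carrier_mat n n"
  shows "A ^\<^sub>m (k + l) = A ^\<^sub>m k * A ^\<^sub>m l"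
  using assms by (induction l) (auto simp: assoc_mult_mat[of _ n n _ n _ n])

lemma transpose_pow_mat:
  fixes A :: "'a :: comm_ring_1 mat"
  assumes A: "A \<in> carrier_mat n n" and sym: "transpose_mat A = A"
  shows "transpose_mat (A ^\<^sub>m k) = A ^\<^sub>m k"
proof (induction k)
  case (Suc k)
  have "transpose_mat (A ^\<^sub>m Suc k) = A * A ^\<^sub>m k"
    using transpose_mult[OF pow_carrier_mat[OF A] A] Suc sym by simp
  also have "\<dots> = A ^\<^sub>m Suc k"
    using pow_mat_add[OF A, of 1 k] pow_mat_add[OF A, of k 1] A by simp
  finally show ?case .
qed (use A in auto)

lemma sym_mat_sq_norm_sq_le:
  fixes B :: "real mat"
  assumes B: "B \<in> carrier_mat n n" and sym: "transpose_mat B = B" and x: "x \<in> carrier_vec n"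
  shows "((B *\<^sub>v x) \<bullet> (B *\<^sub>v x))\<^sup>2 \<le> (x \<bullet> x) * ((B * B *\<^sub>v x) \<bullet> (B * B *\<^sub>v x))"
proof -
  have B2x: "B * B *\<^sub>v x \<in> carrier_vec n" using B x by simp
  have "(B *\<^sub>v x) \<bullet> (B *\<^sub>v x) = (B * B *\<^sub>v x) \<bullet> x"
    using transpose_vec_mult_scalar[OF B x, of "B *\<^sub>v x"] sym B x by simp
  also have "\<dots> = x \<bullet> (B * B *\<^sub>v x)"
    using B2x x by (rule comm_scalar_prod)
  finally show ?thesis using Cauchy_Schwarz_scalar_prod[OF x B2x] by simp
qed

lemma sym_mat_sq_norm_pow2_le:
  fixes A :: "real mat"
  assumes A: "A \<in> carrier_mat n n" and sym: "transpose_mat A = A" and x: "x \<in> carrier_vec n"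
  shows "((A *\<^sub>v x) \<bullet> (A *\<^sub>v x)) ^ 2 ^ k
    \<le> ((A ^\<^sub>m 2 ^ k *\<^sub>v x) \<bullet> (A ^\<^sub>m 2 ^ k *\<^sub>v x)) * (x \<bullet> x) ^ (2 ^ k - 1)"
proof (induction k)
  case 0
  show ?case using A by simp
next
  case (Suc k)
  define m :: nat where "m = 2 ^ k"
  define B where "B = A ^\<^sub>m m"
  have B: "B \<in> carrier_mat n n" using A by (simp add: B_def)
  have sym_B: "transpose_mat B = B" unfolding B_def by (rule transpose_pow_mat[OF A sym])
  have BB: "B * B = A ^\<^sub>m 2 ^ Suc k"
    using pow_mat_add[OF A, of m m] by (simp add: B_def m_def mult_2[symmetric])
  have "((A *\<^sub>v x) \<bullet> (A *\<^sub>v x)) ^ 2 ^ Suc k = (((A *\<^sub>v x) \<bullet> (A *\<^sub>v x)) ^ m)\<^sup>2"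
    by (simp add: m_def power_mult[symmetric] mult.commute)
  also have "\<dots> \<le> (((B *\<^sub>v x) \<bullet> (B *\<^sub>v x)) * (x \<bullet> x) ^ (m - 1))\<^sup>2"
    using Suc by (intro power_mono) (simp_all add: B_def m_def)
  also have "\<dots> = ((B *\<^sub>v x) \<bullet> (B *\<^sub>v x))\<^sup>2 * (x \<bullet> x) ^ (2 * m - 2)"
  proof -
    have "2 * m - 2 = (m - 1) * 2" by simp
    thus ?thesis by (simp only: power_mult_distrib power_mult)
  qed
  also have "\<dots> \<le> (x \<bullet> x) * ((B * B *\<^sub>v x) \<bullet> (B * B *\<^sub>v x)) * (x \<bullet> x) ^ (2 * m - 2)"
    using sym_mat_sq_norm_sq_le[OF B sym_B x]
    by (rule mult_right_mono) simp
  also have "\<dots> = ((A ^\<^sub>m 2 ^ Suc k *\<^sub>v x) \<bullet> (A ^\<^sub>m 2 ^ Suc k *\<^sub>v x)) * (x \<bullet> x) ^ (2 ^ Suc k - 1)"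
  proof -
    have "(2::nat) ^ Suc k = 2 * m" "1 \<le> m" by (simp_all add: m_def)
    hence "2 ^ Suc k - 1 = Suc (2 * m - 2)" by linarith
    thus ?thesis by (simp add: BB)
  qed
  finally show ?case .
qed

lemma sq_norm_mult_mat_vec_le_entry_bound:
  fixes A :: "real mat"
  assumes A: "A \<in> carrier_mat n n" and bound: "\<And>i j. i < n \<Longrightarrow> j < n \<Longrightarrow> \<bar>A $$ (i, j)\<bar> \<le> c"
    and x: "x \<in> carrier_vec n"
  shows "(A *\<^sub>v x) \<bullet> (A *\<^sub>v x) \<le> real n * real n * c\<^sup>2 * (x \<bullet> x)"
proof -
  have row: "(row A i \<bullet> x)\<^sup>2 \<le> real n * c\<^sup>2 * (x \<bullet> x)" if i: "i < n" for i
  proof -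
    have "(row A i \<bullet> x)\<^sup>2 \<le> (row A i \<bullet> row A i) * (x \<bullet> x)"
      using Cauchy_Schwarz_scalar_prod[OF row_carrier_vec[OF i A] x] .
    also have "row A i \<bullet> row A i = (\<Sum>j\<in>{0..<n}. (A $$ (i, j))\<^sup>2)"
      using A i by (simp add: scalar_prod_def power2_eq_square)
    also have "\<dots> \<le> (\<Sum>j\<in>{0..<n}. c\<^sup>2)"
    proof (rule sum_mono)
      fix j assume "j \<in> {0..<n}"
      hence "\<bar>A $$ (i, j)\<bar>\<^sup>2 \<le> c\<^sup>2" using bound[OF i] by (intro power_mono) auto
      thus "(A $$ (i, j))\<^sup>2 \<le> c\<^sup>2" by simp
    qed
    finally show ?thesis by (simp add: mult_right_mono)
  qed
  have "(A *\<^sub>v x) \<bullet> (A *\<^sub>v x) = (\<Sum>i\<in>{0..<n}. (row A i \<bullet> x)\<^sup>2)"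
    using A by (simp add: scalar_prod_def power2_eq_square)
  also have "\<dots> \<le> (\<Sum>i\<in>{0..<n}. real n * c\<^sup>2 * (x \<bullet> x))" using row by (intro sum_mono) auto
  finally show ?thesis by simp
qed

lemma sym_mat_contraction_of_bounded_powers:
  fixes A :: "real mat"
  assumes A: "A \<in> carrier_mat n n" and sym: "transpose_mat A = A" and x: "x \<in> carrier_vec n"
    and bound: "\<And>k i j. i < n \<Longrightarrow> j < n \<Longrightarrow> \<bar>(A ^\<^sub>m k) $$ (i, j)\<bar> \<le> c"
  shows "(A *\<^sub>v x) \<bullet> (A *\<^sub>v x) \<le> x \<bullet> x"
proof (rule ccontr)
  define a where "a = (A *\<^sub>v x) \<bullet> (A *\<^sub>v x)"
  define b where "b = x \<bullet> x"
  define K where "K = real n * real n * c\<^sup>2"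
  assume "\<not> (A *\<^sub>v x) \<bullet> (A *\<^sub>v x) \<le> x \<bullet> x"
  hence ab: "b < a" "0 \<le> b" by (simp_all add: a_def b_def)
  have growth: "a ^ 2 ^ k \<le> K * b ^ 2 ^ k" for k
  proof -
    have "a ^ 2 ^ k \<le> ((A ^\<^sub>m 2 ^ k *\<^sub>v x) \<bullet> (A ^\<^sub>m 2 ^ k *\<^sub>v x)) * b ^ (2 ^ k - 1)"
      unfolding a_def b_def by (rule sym_mat_sq_norm_pow2_le[OF A sym x])
    also have "\<dots> \<le> (K * b) * b ^ (2 ^ k - 1)"
      unfolding K_def b_def using A x bound
      by (intro mult_right_mono sq_norm_mult_mat_vec_le_entry_bound[of _ n]) auto
    also have "\<dots> = K * b ^ 2 ^ k"
      by (simp add: mult.assoc power_eq_if[of b "2 ^ k"])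
    finally show ?thesis .
  qed
  show False
  proof (cases "b = 0")
    case True
    thus False using growth[of 0] ab by simp
  next
    case False
    with ab have b: "0 < b" by simp
    have ratio: "1 < a / b" using ab b by simp
    obtain k where "K < (a / b) ^ k" using real_arch_pow[OF ratio] by blast
    also have "\<dots> \<le> (a / b) ^ 2 ^ k"
      using ratio by (intro power_increasing less_imp_le[OF less_exp]) auto
    also have "\<dots> \<le> K"
      using growth[of k] b by (simp add: power_divide divide_le_eq)
    finally show False by simp
  qed
qed

lemma eigenvalue_smult_matD:
  fixes B :: "'a :: field mat"
  assumes B: "B \<in> carrier_mat n n" and c: "c \<noteq> 0" and ev: "eigenvalue (c \<cdot>\<^sub>m B) \<mu>"
  shows "eigenvalue B (\<mu> / c)"
proof -
  from ev obtain v where v: "v \<in> carrier_vec n" "v \<noteq> 0\<^sub>v n" and Bv: "(c \<cdot>\<^sub>m B) *\<^sub>v v = \<mu> \<cdot>\<^sub>v v"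
    using B unfolding eigenvalue_def eigenvector_def by auto
  have "B *\<^sub>v v = (\<mu> / c) \<cdot>\<^sub>v v"
  proof (rule eq_vecI)
    fix i assume "i < dim_vec ((\<mu> / c) \<cdot>\<^sub>v v)"
    hence i: "i < n" using v by simp
    have "c * (B *\<^sub>v v) $ i = \<mu> * v $ i"
      using arg_cong[OF Bv, of "\<lambda>w. w $ i"] i B v
      by (simp add: scalar_prod_def sum_distrib_left mult.assoc)
    thus "(B *\<^sub>v v) $ i = ((\<mu> / c) \<cdot>\<^sub>v v) $ i" using i v c by (simp add: field_simps)
  qed (use B v in simp)
  thus ?thesis using v B unfolding eigenvalue_def eigenvector_def by auto
qed

lemma pow_mat_entries_bounded_of_spectrum_lt_1:
  fixes A :: "real mat"
  assumes A: "A \<in> carrier_mat n n"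
    and spectrum: "\<And>\<mu>. eigenvalue (map_mat complex_of_real A) \<mu> \<Longrightarrow> cmod \<mu> < 1"
  obtains c where "\<And>k i j. i < n \<Longrightarrow> j < n \<Longrightarrow> \<bar>(A ^\<^sub>m k) $$ (i, j)\<bar> \<le> c"
proof (cases "n = 0")
  case False
  define Ac where "Ac = map_mat complex_of_real A"
  have Ac: "Ac \<in> carrier_mat n n" using A by (simp add: Ac_def)
  have "spectral_radius Ac < 1"
    using spectral_radius_mem_max(1)[OF Ac] False spectrum by (auto simp: Ac_def spectrum_def)
  then obtain c where c: "\<And>k. norm_bound (Ac ^\<^sub>m k) c"
    using spectral_radius_jnf_norm_bound_less_1_upper_triangular[OF Ac] by blast
  show thesis
  proof (rule that)
    fix k i j assume ij: "i < n" "j < n"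
    have "Ac ^\<^sub>m k = map_mat complex_of_real (A ^\<^sub>m k)"
      unfolding Ac_def by (rule of_real_hom.mat_hom_pow[OF A, symmetric])
    thus "\<bar>(A ^\<^sub>m k) $$ (i, j)\<bar> \<le> c"
      using c[of k] ij A unfolding norm_bound_def by force
  qed
qed simp

lemma sym_mat_sq_norm_le_of_roots_less:
  fixes T :: "real mat"
  assumes T: "T \<in> carrier_mat n n" and sym: "transpose_mat T = T" and s: "0 < s"
    and roots: "\<And>\<mu>. poly (map_poly complex_of_real (char_poly T)) \<mu> = 0 \<Longrightarrow> cmod \<mu> < s"
    and x: "x \<in> carrier_vec n"
  shows "(T *\<^sub>v x) \<bullet> (T *\<^sub>v x) \<le> s\<^sup>2 * (x \<bullet> x)"
proof -
  define A where "A = (1 / s) \<cdot>\<^sub>m T"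
  have A: "A \<in> carrier_mat n n" using T by (simp add: A_def)
  have "transpose_mat A = (1 / s) \<cdot>\<^sub>m transpose_mat T"
    unfolding A_def by (intro eq_matI) auto
  hence sym_A: "transpose_mat A = A" by (simp add: sym A_def)
  have "cmod \<mu> < 1" if ev: "eigenvalue (map_mat complex_of_real A) \<mu>" for \<mu>
  proof -
    have "map_mat complex_of_real A = complex_of_real (1 / s) \<cdot>\<^sub>m map_mat complex_of_real T"
      unfolding A_def by (intro eq_matI) auto
    with ev have "eigenvalue (map_mat complex_of_real T) (\<mu> * complex_of_real s)"
      using eigenvalue_smult_matD[of "map_mat complex_of_real T" n "complex_of_real (1 / s)" \<mu>] T s
      by simp
    hence "cmod (\<mu> * complex_of_real s) < s"
      using roots T by (simp add: eigenvalue_root_char_poly[of _ n] of_real_hom.char_poly_hom)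
    hence "cmod \<mu> * s < 1 * s" using s by (simp add: norm_mult)
    thus ?thesis by (rule mult_right_less_imp_less) (use s in simp)
  qed
  then obtain c where "\<And>k i j. i < n \<Longrightarrow> j < n \<Longrightarrow> \<bar>(A ^\<^sub>m k) $$ (i, j)\<bar> \<le> c"
    using pow_mat_entries_bounded_of_spectrum_lt_1[OF A] by blast
  hence "(A *\<^sub>v x) \<bullet> (A *\<^sub>v x) \<le> x \<bullet> x"
    by (rule sym_mat_contraction_of_bounded_powers[OF A sym_A x])
  moreover have "T *\<^sub>v x = s \<cdot>\<^sub>v (A *\<^sub>v x)"
    using T x s by (intro eq_vecI) (auto simp: A_def scalar_prod_def sum_distrib_left)
  hence "(T *\<^sub>v x) \<bullet> (T *\<^sub>v x) = s\<^sup>2 * ((A *\<^sub>v x) \<bullet> (A *\<^sub>v x))"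
    using A x by (simp add: power2_eq_square)
  ultimately show ?thesis by (simp add: mult_left_mono)
qed

lemma le_sq_mult_of_forall_gt:
  fixes a b r :: real
  assumes r: "0 \<le> r" and b: "0 \<le> b" and gt: "\<And>s. r < s \<Longrightarrow> a \<le> s\<^sup>2 * b"
  shows "a \<le> r\<^sup>2 * b"
proof (cases "b = 0")
  case True
  thus ?thesis using gt[of "r + 1"] by simp
next
  case False
  with b have b: "0 < b" by simp
  have "a / b \<le> r\<^sup>2"
  proof (rule dense_ge)
    fix w assume w: "r\<^sup>2 < w"
    hence "0 \<le> w" using zero_le_power2[of r] by linarith
    moreover from w have "r < sqrt w" using r real_less_rsqrt by blast
    ultimately show "a / b \<le> w" using gt[of "sqrt w"] b by (simp add: divide_le_eq)
  qed
  thus ?thesis using b by (simp add: divide_le_eq)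
qed

lemma sym_mat_sq_norm_le:
  fixes T :: "real mat"
  assumes T: "T \<in> carrier_mat n n" and sym: "transpose_mat T = T" and r: "0 \<le> r"
    and roots: "\<And>\<mu>. poly (map_poly complex_of_real (char_poly T)) \<mu> = 0 \<Longrightarrow> cmod \<mu> \<le> r"
    and x: "x \<in> carrier_vec n"
  shows "(T *\<^sub>v x) \<bullet> (T *\<^sub>v x) \<le> r\<^sup>2 * (x \<bullet> x)"
proof (rule le_sq_mult_of_forall_gt[OF r scalar_prod_self_nonneg])
  fix s assume "r < s"
  with r roots show "(T *\<^sub>v x) \<bullet> (T *\<^sub>v x) \<le> s\<^sup>2 * (x \<bullet> x)"
    by (intro sym_mat_sq_norm_le_of_roots_less[OF T sym _ _ x]) force+
qed

section \<open>Expander mixing\<close>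

definition indicator_vec :: "nat \<Rightarrow> nat set \<Rightarrow> real vec" where
  "indicator_vec n S = vec n (\<lambda>i. if i \<in> S then 1 else 0)"

lemma indicator_vec_carrier [simp]: "indicator_vec n S \<in> carrier_vec n"
  by (simp add: indicator_vec_def)

lemma scalar_prod_indicator_vec:
  assumes v: "v \<in> carrier_vec n" and S: "S \<subseteq> {0..<n}"
  shows "indicator_vec n S \<bullet> v = (\<Sum>i\<in>S. v $ i)"
proof -
  have "indicator_vec n S \<bullet> v = (\<Sum>i\<in>{0..<n}. if i \<in> S then v $ i else 0)"
    using v by (auto simp: indicator_vec_def scalar_prod_def intro: sum.cong)
  also have "\<dots> = (\<Sum>i\<in>S. v $ i)"
    using S by (simp add: sum.inter_restrict[symmetric] Int_absorb1)
  finally show ?thesis .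
qed

lemma scalar_prod_indicator_vec_self:
  assumes S: "S \<subseteq> {0..<n}"
  shows "indicator_vec n S \<bullet> indicator_vec n S = real (card S)"
proof -
  have "indicator_vec n S \<bullet> indicator_vec n S = (\<Sum>i\<in>S. indicator_vec n S $ i)"
    using S by (simp add: scalar_prod_indicator_vec)
  also have "\<dots> = (\<Sum>i\<in>S. 1)"
    using S by (intro sum.cong) (auto simp: indicator_vec_def)
  finally show ?thesis by simp
qed

lemma scalar_prod_indicator_vec_mult_mat_vec:
  assumes X: "X \<in> carrier_mat n n" and S: "S \<subseteq> {0..<n}" and Z: "Z \<subseteq> {0..<n}"
  shows "indicator_vec n S \<bullet> (X *\<^sub>v indicator_vec n Z) = (\<Sum>i\<in>S. \<Sum>j\<in>Z. X $$ (i, j))"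
proof -
  have "(X *\<^sub>v indicator_vec n Z) $ i = (\<Sum>j\<in>Z. X $$ (i, j))" if "i \<in> S" for i
  proof -
    have i: "i < n" using that S by auto
    have "(X *\<^sub>v indicator_vec n Z) $ i = indicator_vec n Z \<bullet> row X i"
      using X i by (simp add: comm_scalar_prod[of _ n])
    thus ?thesis using X i Z by (auto simp: scalar_prod_indicator_vec intro!: sum.cong)
  qed
  thus ?thesis using X S by (simp add: scalar_prod_indicator_vec)
qed

lemma ndl_graphE:
  assumes "ndl_graph n d lam E"
  obtains q where "simple_graph_on n E" "\<And>v. v < n \<Longrightarrow> card (nbhd E v) = d"
    "char_poly (adj_mat n E) = [:- real d, 1:] * q" "n = Suc (degree q)"
    "\<And>z. poly (map_poly complex_of_real q) z = 0 \<Longrightarrow> cmod z \<le> lam"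
proof -
  from assms obtain q where graph: "simple_graph_on n E" "\<And>v. v < n \<Longrightarrow> card (nbhd E v) = d"
    and cp: "char_poly (adj_mat n E) = [:- real d, 1:] * q"
    and roots: "\<And>z. poly (map_poly complex_of_real q) z = 0 \<Longrightarrow> cmod z \<le> lam"
    unfolding ndl_graph_def by auto
  have M: "adj_mat n E \<in> carrier_mat n n" by (simp add: adj_mat_def)
  have "q \<noteq> 0" using cp degree_monic_char_poly[OF M] by auto
  have "n = degree ([:- real d, 1:] * q)" using degree_monic_char_poly[OF M] cp by metis
  also have "\<dots> = Suc (degree q)" using \<open>q \<noteq> 0\<close> by (subst degree_mult_eq) auto
  finally show thesis using that[OF graph cp _ roots] by blast
qed

lemma simple_graph_card_nbhd_less:
  assumes "simple_graph_on n E" "v < n"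
  shows "card (nbhd E v) < n"
proof -
  have "nbhd E v \<subseteq> {0..<n} - {v}"
    using assms unfolding simple_graph_on_def nbhd_def by auto
  hence "card (nbhd E v) \<le> card ({0..<n} - {v})" by (intro card_mono) auto
  thus ?thesis using assms(2) by simp
qed

lemma ndl_graph_degree_less: "ndl_graph n d lam E \<Longrightarrow> d < n"
  by (metis ndl_graphE simple_graph_card_nbhd_less zero_less_Suc)

lemma ndl_graph_lam_nonneg:
  assumes "ndl_graph n d lam E" "2 \<le> n"
  shows "0 \<le> lam"
proof -
  obtain q where deg: "n = Suc (degree q)"
    and roots: "\<And>z. poly (map_poly complex_of_real q) z = 0 \<Longrightarrow> cmod z \<le> lam"
    using assms(1) by (rule ndl_graphE) blast
  have "\<not> constant (poly (map_poly complex_of_real q))"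
    using deg assms(2) by (simp add: constant_degree)
  then obtain z where "poly (map_poly complex_of_real q) z = 0"
    using fundamental_theorem_of_algebra by blast
  hence "cmod z \<le> lam" by (rule roots)
  thus ?thesis using norm_ge_zero[of z] by linarith
qed

lemma adj_mat_mult_ones:
  assumes "simple_graph_on n E" "\<And>v. v < n \<Longrightarrow> card (nbhd E v) = d"
  shows "adj_mat n E *\<^sub>v vec n (\<lambda>_. 1) = real d \<cdot>\<^sub>v vec n (\<lambda>_. 1)"
proof (rule eq_vecI)
  fix i assume "i < dim_vec (real d \<cdot>\<^sub>v vec n (\<lambda>_. 1 :: real))"
  hence i: "i < n" by simp
  have "nbhd E i = {j \<in> {0..<n}. E i j}"
    using assms(1) unfolding simple_graph_on_def nbhd_def by auto
  hence "(\<Sum>j\<in>{0..<n}. if E i j then 1 else 0) = real (card (nbhd E i))"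
    by (simp add: sum.inter_filter[symmetric])
  thus "(adj_mat n E *\<^sub>v vec n (\<lambda>_. 1)) $ i = (real d \<cdot>\<^sub>v vec n (\<lambda>_. 1)) $ i"
    using i assms(2) by (simp add: adj_mat_def scalar_prod_def)
qed (simp add: adj_mat_def)

definition centered_adj_mat :: "nat \<Rightarrow> nat \<Rightarrow> (nat \<Rightarrow> nat \<Rightarrow> bool) \<Rightarrow> real mat" where
  "centered_adj_mat n d E = adj_mat n E - (real d / real n) \<cdot>\<^sub>m mat n n (\<lambda>_. 1)"

lemma centered_adj_mat_carrier: "centered_adj_mat n d E \<in> carrier_mat n n"
  unfolding centered_adj_mat_def adj_mat_def by (meson minus_carrier_mat smult_carrier_mat mat_carrier)

lemma centered_adj_mat_dim [simp]:
  "dim_row (centered_adj_mat n d E) = n" "dim_col (centered_adj_mat n d E) = n"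
  using centered_adj_mat_carrier by auto

lemma centered_adj_mat_index:
  "i < n \<Longrightarrow> j < n \<Longrightarrow> centered_adj_mat n d E $$ (i, j) = (if E i j then 1 else 0) - real d / real n"
  by (simp add: centered_adj_mat_def adj_mat_def)

lemma centered_adj_mat_sq_norm_le:
  assumes G: "ndl_graph n d lam E" and lam: "0 \<le> lam" and x: "x \<in> carrier_vec n"
  shows "(centered_adj_mat n d E *\<^sub>v x) \<bullet> (centered_adj_mat n d E *\<^sub>v x) \<le> lam\<^sup>2 * (x \<bullet> x)"
proof -
  obtain q where graph: "simple_graph_on n E" and reg: "\<And>v. v < n \<Longrightarrow> card (nbhd E v) = d"
    and cp: "char_poly (adj_mat n E) = [:- real d, 1:] * q" and n: "n = Suc (degree q)"
    and roots: "\<And>z. poly (map_poly complex_of_real q) z = 0 \<Longrightarrow> cmod z \<le> lam"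
    using G by (rule ndl_graphE) blast
  let ?T = "centered_adj_mat n d E"
  have "char_poly ?T = [:- (real d - real d / real n * real n), 1:] * q"
    unfolding centered_adj_mat_def
    by (rule char_poly_minus_smult_ones_mat[OF _ _ adj_mat_mult_ones[OF graph reg] cp])
      (simp_all add: adj_mat_def n)
  hence cp_T: "char_poly ?T = pCons 0 q" using n by simp
  have "transpose_mat ?T = ?T"
    using graph unfolding simple_graph_on_def
    by (intro eq_matI) (auto simp: centered_adj_mat_index)
  moreover have "cmod \<mu> \<le> lam" if "poly (map_poly complex_of_real (char_poly ?T)) \<mu> = 0" for \<mu>
    using that roots lam by (auto simp: cp_T of_real_hom.map_poly_pCons_hom)
  ultimately show ?thesis by (intro sym_mat_sq_norm_le[OF centered_adj_mat_carrier _ lam _ x])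
qed

lemma expander_mixing:
  assumes G: "ndl_graph n d lam E" and lam: "0 \<le> lam"
    and S: "S \<subseteq> {0..<n}" and Z: "Z \<subseteq> {0..<n}"
  shows "((\<Sum>i\<in>S. real (card (nbhd E i \<inter> Z))) - real (card S) * real (card Z) * real d / real n)\<^sup>2
    \<le> lam\<^sup>2 * real (card S) * real (card Z)"
proof -
  let ?T = "centered_adj_mat n d E"
  define s where "s = indicator_vec n S"
  define z where "z = indicator_vec n Z"
  have row_sum: "(\<Sum>j\<in>Z. ?T $$ (i, j)) = real (card (nbhd E i \<inter> Z)) - real (card Z) * real d / real n"
    if "i \<in> S" for i
  proof -
    have "(\<Sum>j\<in>Z. ?T $$ (i, j)) = (\<Sum>j\<in>Z. (if E i j then 1 else 0) - real d / real n)"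
      using that S Z by (intro sum.cong refl centered_adj_mat_index) auto
    also have "\<dots> = (\<Sum>j\<in>Z. if E i j then 1 else 0) - real (card Z) * real d / real n"
      by (simp add: sum_subtractf)
    also have "(\<Sum>j\<in>Z. if E i j then 1 else 0 :: real) = real (card (nbhd E i \<inter> Z))"
      using finite_subset[OF Z] by (simp add: sum.inter_filter[symmetric] nbhd_def Int_def conj_commute)
    finally show ?thesis .
  qed
  have "s \<bullet> (?T *\<^sub>v z) = (\<Sum>i\<in>S. \<Sum>j\<in>Z. ?T $$ (i, j))"
    unfolding s_def z_def by (rule scalar_prod_indicator_vec_mult_mat_vec[OF centered_adj_mat_carrier S Z])
  also have "\<dots> = (\<Sum>i\<in>S. real (card (nbhd E i \<inter> Z)) - real (card Z) * real d / real n)"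
    by (rule sum.cong[OF refl row_sum])
  also have "\<dots> = (\<Sum>i\<in>S. real (card (nbhd E i \<inter> Z))) - real (card S) * real (card Z) * real d / real n"
    by (simp add: sum_subtractf)
  finally have mixing_term: "s \<bullet> (?T *\<^sub>v z)
      = (\<Sum>i\<in>S. real (card (nbhd E i \<inter> Z))) - real (card S) * real (card Z) * real d / real n" .
  have Tz: "?T *\<^sub>v z \<in> carrier_vec n"
    unfolding z_def by (rule mult_mat_vec_carrier[OF centered_adj_mat_carrier indicator_vec_carrier])
  have "(s \<bullet> (?T *\<^sub>v z))\<^sup>2 \<le> (s \<bullet> s) * ((?T *\<^sub>v z) \<bullet> (?T *\<^sub>v z))"
    unfolding s_def by (rule Cauchy_Schwarz_scalar_prod[OF indicator_vec_carrier Tz])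
  also have "\<dots> \<le> (s \<bullet> s) * (lam\<^sup>2 * (z \<bullet> z))"
    unfolding z_def
    by (intro mult_left_mono centered_adj_mat_sq_norm_le[OF G lam indicator_vec_carrier]) simp
  also have "\<dots> = lam\<^sup>2 * real (card S) * real (card Z)"
    using S Z by (simp add: s_def z_def scalar_prod_indicator_vec_self)
  finally show ?thesis unfolding mixing_term .
qed

lemma ndl_graph_lam_pos:
  assumes G: "ndl_graph n d lam E" and d: "0 < d"
  shows "0 < lam"
proof -
  have n: "d < n" by (rule ndl_graph_degree_less[OF G])
  have lam: "0 \<le> lam" using ndl_graph_lam_nonneg[OF G] n d by simp
  have "nbhd E 0 \<inter> {0} = {}"
    using G unfolding ndl_graph_def simple_graph_on_def nbhd_def by auto
  hence "(real d / real n)\<^sup>2 \<le> lam\<^sup>2"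
    using expander_mixing[OF G lam, of "{0}" "{0}"] n by (simp add: power2_eq_square)
  moreover have "0 < real d / real n" using n d by simp
  ultimately have "lam \<noteq> 0" by auto
  with lam show ?thesis by simp
qed

lemma sum_card_nbhd_inter_ge:
  assumes sub: "subgraph E' E" and A: "finite A" and B: "finite B"
    and deg: "\<forall>v\<in>A. \<delta> \<le> real (card (nbhd E' v \<inter> B))"
  shows "\<delta> * real (card A) \<le> (\<Sum>v\<in>A. real (card (nbhd E v \<inter> (nbhd_set E' A \<inter> B \<union> A))))"
proof -
  have "\<delta> \<le> real (card (nbhd E v \<inter> (nbhd_set E' A \<inter> B \<union> A)))" if v: "v \<in> A" for v
  proof -
    have "nbhd E' v \<inter> B \<subseteq> nbhd E v \<inter> (nbhd_set E' A \<inter> B \<union> A)"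
      using sub v unfolding subgraph_def nbhd_set_def nbhd_def by auto
    hence "card (nbhd E' v \<inter> B) \<le> card (nbhd E v \<inter> (nbhd_set E' A \<inter> B \<union> A))"
      using A B by (intro card_mono) auto
    thus ?thesis using deg v by (meson of_nat_le_iff order_trans)
  qed
  hence "(\<Sum>v\<in>A. \<delta>) \<le> (\<Sum>v\<in>A. real (card (nbhd E v \<inter> (nbhd_set E' A \<inter> B \<union> A))))"
    by (rule sum_mono)
  thus ?thesis by (simp add: mult.commute)
qed

lemma expansion_bound_of_mixing:
  fixes a z y e lam \<delta> n d :: real
  assumes lam: "0 < lam" "10 * lam \<le> \<delta>" and nd: "0 < n" "0 < d"
    and a: "0 \<le> a" "a \<le> \<delta> * n / (100 * d)" and y: "0 \<le> y" "z \<le> y + a"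
    and e: "\<delta> * a \<le> e" and mixing: "(e - a * z * d / n)\<^sup>2 \<le> lam\<^sup>2 * a * z"
  shows "min (\<delta>\<^sup>2 * a / (8 * lam\<^sup>2)) (\<delta> * n / (10 * d)) \<le> y"
    and "10 * a \<le> min (\<delta>\<^sup>2 * a / (8 * lam\<^sup>2)) (\<delta> * n / (10 * d))"
proof -
  define F where "F = \<delta>\<^sup>2 * a / (8 * lam\<^sup>2)"
  define R where "R = \<delta> * n / d"
  have "(10 * lam)\<^sup>2 \<le> \<delta>\<^sup>2" using lam by (intro power_mono) auto
  hence "100 * lam\<^sup>2 \<le> \<delta>\<^sup>2" by (simp add: power_mult_distrib)
  hence "80 * lam\<^sup>2 \<le> \<delta>\<^sup>2" using zero_le_power2[of lam] by linarith
  hence "80 * lam\<^sup>2 * a \<le> \<delta>\<^sup>2 * a" using a by (intro mult_right_mono) auto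
  hence F: "10 * a \<le> F" using lam by (simp add: F_def field_simps)
  have R: "\<delta> * n / (10 * d) = R / 10" "\<delta> * n / (100 * d) = R / 100" by (simp_all add: R_def)
  show "10 * a \<le> min F (\<delta> * n / (10 * d))" using F a(2) R by simp
  show "min F (\<delta> * n / (10 * d)) \<le> y"
  proof (cases "z \<le> R / 2")
    case True
    have "a * z * d / n \<le> a * (R / 2) * d / n"
      using True a nd by (intro divide_right_mono mult_right_mono mult_left_mono) auto
    also have "\<dots> = \<delta> * a / 2" using nd by (simp add: R_def)
    finally have "(\<delta> * a / 2)\<^sup>2 \<le> (e - a * z * d / n)\<^sup>2"
      using e lam a by (intro power_mono) auto
    hence "a * (\<delta>\<^sup>2 * a) \<le> a * (4 * lam\<^sup>2 * z)"
      using mixing by (simp add: power2_eq_square algebra_simps)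
    hence "a = 0 \<or> \<delta>\<^sup>2 * a \<le> 4 * lam\<^sup>2 * z"
      using a by (auto dest: mult_left_le_imp_le)
    hence "a = 0 \<or> 2 * F \<le> z"
      using lam by (auto simp: F_def field_simps)
    moreover have "a = 0 \<Longrightarrow> F = 0" by (simp add: F_def)
    ultimately have "F \<le> y" using F y a(1) by linarith
    thus ?thesis by simp
  next
    case False
    thus ?thesis using y a R lam nd by (simp add: R_def)
  qed
qed

theorem lemma3p9:
  fixes n d :: nat and lam \<delta> :: real and E E' :: "nat \<Rightarrow> nat \<Rightarrow> bool" and A B :: "nat set"
  assumes "ndl_graph n d lam E"
    and "subgraph E' E"
    and "10 * lam \<le> \<delta>" and "\<delta> \<le> real d"
    and "A \<subseteq> {0..<n}" and "B \<subseteq> {0..<n}"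
    and "real (card A) \<le> \<delta> * real n / (100 * real d)"
    and "\<forall>v\<in>A. real (card (nbhd E' v \<inter> B)) \<ge> \<delta>"
  shows "real (card (nbhd_set E' A \<inter> B))
           \<ge> min (\<delta>^2 * real (card A) / (8 * lam^2)) (\<delta> * real n / (10 * real d))
    \<and> min (\<delta>^2 * real (card A) / (8 * lam^2)) (\<delta> * real n / (10 * real d)) \<ge> 10 * real (card A)"
proof (cases "d = 0")
  case True
  hence "A = {}" using assms(5,7) finite_subset by fastforce
  thus ?thesis using True by simp
next
  case False
  have lam: "0 < lam" using ndl_graph_lam_pos[OF assms(1)] False by simp
  have n: "d < n" by (rule ndl_graph_degree_less[OF assms(1)])
  have fin: "finite A" "finite B" using assms(5,6) finite_subset by auto
  define Z where "Z = nbhd_set E' A \<inter> B \<union> A"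
  have Z: "Z \<subseteq> {0..<n}" using assms(5,6) by (auto simp: Z_def)
  have "real (card Z) \<le> real (card (nbhd_set E' A \<inter> B)) + real (card A)"
    unfolding Z_def using card_Un_le of_nat_mono by fastforce
  from expansion_bound_of_mixing[OF lam assms(3) _ _ of_nat_0_le_iff assms(7) of_nat_0_le_iff this
      sum_card_nbhd_inter_ge[OF assms(2) fin assms(8), folded Z_def]
      expander_mixing[OF assms(1) less_imp_le[OF lam] assms(5) Z]]
  show ?thesis using n False by simp
qed

end
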